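(* Let $X$ be a compact metric space and $(f_n)_{n\ge1}$ a sequence of continuous maps $X\to X$ converging uniformly to a function $\phi\colon X\to X$. Let $p\in\mathbb{N}^*$ and $x\in X$. Then $f_1^p(x)$ is a periodic point of $\phi$ if and only if there is a positive integer $n$ such that $f_1^p(x)=f_1^{p+n}(x)$.
   Context: $\mathbb{N}=\{1,2,\dots\}$, $\mathbb{N}^*$ the free ultrafilters on $\mathbb{N}$. For $r\in\mathbb{N}^*$, $r\text{-}\lim_m x_m$ is the unique $y$ with $\{m:x_m\in V\}\in r$ for all neighbourhoods $V$ of $y$. $f_1^m=f_m\circ\cdots\circ f_1$, $f_1^r(x)=r\text{-}\lim_m f_1^m(x)$ for $r\in\mathbb{N}^*$; $p+n=\{A:\{m:m+n\in A\}\in p\}$. A point $y$ is a periodic point of $\phi$ if $\phi^n(y)=y$ for some positive integer $n$. *)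

theory Defs
  imports "HOL-Analysis.Analysis"
begin

definition ultrafilter_on_nat :: "nat set set \<Rightarrow> bool" where
  "ultrafilter_on_nat U \<longleftrightarrow>
     {} \<notin> U \<and> UNIV \<in> U \<and>
     (\<forall>A B. A \<in> U \<and> B \<in> U \<longrightarrow> A \<inter> B \<in> U) \<and>
     (\<forall>A B. A \<in> U \<and> A \<subseteq> B \<longrightarrow> B \<in> U) \<and>
     (\<forall>A. A \<in> U \<or> - A \<in> U)"

text \<open>Free ultrafilters: no finite member (the elements of N^*).\<close>
definition free_ultrafilter_nat :: "nat set set \<Rightarrow> bool" where
  "free_ultrafilter_nat U \<longleftrightarrow> ultrafilter_on_nat U \<and> (\<forall>A\<in>U. infinite A)"

definition uf_shift :: "nat set set \<Rightarrow> nat \<Rightarrow> nat set set" where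
  "uf_shift p n = {A. {m. m + n \<in> A} \<in> p}"

definition uf_lim :: "'a::metric_space set \<Rightarrow> nat set set \<Rightarrow> (nat \<Rightarrow> 'a) \<Rightarrow> 'a" where
  "uf_lim X r s = (THE y. y \<in> X \<and> (\<forall>V. open V \<longrightarrow> y \<in> V \<longrightarrow> {m. s m \<in> V} \<in> r))"

fun comp_seq :: "(nat \<Rightarrow> 'a \<Rightarrow> 'a) \<Rightarrow> nat \<Rightarrow> 'a \<Rightarrow> 'a" where
  "comp_seq f 0 = id"
| "comp_seq f (Suc m) = f (Suc m) \<circ> comp_seq f m"

definition comp_uf :: "'a::metric_space set \<Rightarrow> (nat \<Rightarrow> 'a \<Rightarrow> 'a) \<Rightarrow> nat set set \<Rightarrow> 'a \<Rightarrow> 'a" where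
  "comp_uf X f r x = uf_lim X r (\<lambda>m. comp_seq f m x)"

definition periodic_point :: "('a \<Rightarrow> 'a) \<Rightarrow> 'a \<Rightarrow> bool" where
  "periodic_point \<phi> y \<longleftrightarrow> (\<exists>n>0. (\<phi> ^^ n) y = y)"

end

theory Submission
  imports Defs
begin

text \<open>Read p as a filter on the naturals. Then f_1^p(x) is the limit along p of the orbit
  f_1^m(x), and f_1^(p+n)(x) the limit along p of the shifted orbit f_1^(m+n)(x). A free
  ultrafilter is finer than the cofinite filter, so the index m+n+1 tends to infinity along p;
  as f_m converges uniformly to the continuous map phi, applying f_(m+n+1) to the shifted orbit
  applies phi to its limit. By induction f_1^(p+n)(x) = phi^n(f_1^p(x)), and periodicity of
  f_1^p(x) becomes the stated condition.\<close>

definition uf_filter :: "nat set set \<Rightarrow> nat filter" where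
  "uf_filter U = Abs_filter (\<lambda>P. {m. P m} \<in> U)"

lemma eventually_uf_filter:
  assumes "ultrafilter_on_nat U"
  shows "eventually P (uf_filter U) \<longleftrightarrow> {m. P m} \<in> U"
proof -
  have "is_filter (\<lambda>P. {m. P m} \<in> U)"
  proof
    show "{m. True} \<in> U" using assms by (simp add: ultrafilter_on_nat_def)
  next
    fix P Q assume "{m. P m} \<in> U" "{m. Q m} \<in> U"
    then have "{m. P m} \<inter> {m. Q m} \<in> U" using assms by (simp add: ultrafilter_on_nat_def)
    then show "{m. P m \<and> Q m} \<in> U" by (simp add: Collect_conj_eq)
  next
    fix P Q assume "\<forall>x. P x \<longrightarrow> Q x" "{m. P m} \<in> U"
    then show "{m. Q m} \<in> U" using assms unfolding ultrafilter_on_nat_def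
      by (metis (mono_tags, lifting) mem_Collect_eq subsetI)
  qed
  then show ?thesis unfolding uf_filter_def by (simp add: eventually_Abs_filter)
qed

lemma uf_filter_neq_bot:
  assumes "ultrafilter_on_nat U"
  shows "uf_filter U \<noteq> bot"
  using assms by (simp add: trivial_limit_def eventually_uf_filter ultrafilter_on_nat_def)

lemma eventually_uf_filter_or_not:
  assumes "ultrafilter_on_nat U"
  shows "eventually P (uf_filter U) \<or> eventually (\<lambda>m. \<not> P m) (uf_filter U)"
  using assms by (simp add: eventually_uf_filter ultrafilter_on_nat_def Collect_neg_eq)

lemma free_uf_filter_le_sequentially:
  assumes "free_ultrafilter_nat p"
  shows "uf_filter p \<le> sequentially"
  unfolding le_sequentially
proof
  fix N
  have U: "ultrafilter_on_nat p" using assms by (simp add: free_ultrafilter_nat_def)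
  have "{m. m < N} \<notin> p" using assms by (auto simp: free_ultrafilter_nat_def)
  then show "eventually (\<lambda>m. N \<le> m) (uf_filter p)"
    using eventually_uf_filter_or_not[OF U, of "\<lambda>m. m < N"]
    by (auto simp: eventually_uf_filter[OF U] not_less)
qed

lemma tendsto_uf_filter_iff:
  assumes "ultrafilter_on_nat U"
  shows "(s \<longlongrightarrow> y) (uf_filter U) \<longleftrightarrow> (\<forall>V. open V \<longrightarrow> y \<in> V \<longrightarrow> {m. s m \<in> V} \<in> U)"
  by (simp add: tendsto_def eventually_uf_filter[OF assms])

text \<open>A limit point of the image filter is a limit, because the image of an ultrafilter
  is again an ultrafilter.\<close>
lemma compact_uf_filter_convergent:
  fixes s :: "nat \<Rightarrow> 'a::topological_space"
  assumes U: "ultrafilter_on_nat U" and X: "compact X" and s: "\<And>m. s m \<in> X"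
  obtains y where "y \<in> X" "(s \<longlongrightarrow> y) (uf_filter U)"
proof -
  have "filtermap s (uf_filter U) \<noteq> bot"
    using uf_filter_neq_bot[OF U] by (simp add: filtermap_bot_iff)
  moreover have "eventually (\<lambda>z. z \<in> X) (filtermap s (uf_filter U))"
    by (simp add: eventually_filtermap s)
  ultimately obtain y where y: "y \<in> X"
    and cluster: "inf (nhds y) (filtermap s (uf_filter U)) \<noteq> bot"
    using X unfolding compact_filter by blast
  have "eventually (\<lambda>m. s m \<in> V) (uf_filter U)" if "open V" "y \<in> V" for V
  proof (rule ccontr)
    assume "\<not> ?thesis"
    then have "eventually (\<lambda>m. s m \<notin> V) (uf_filter U)"
      using eventually_uf_filter_or_not[OF U] by blast
    moreover have "eventually (\<lambda>z. z \<in> V) (nhds y)"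
      using that by (rule eventually_nhds_in_open)
    ultimately have "eventually (\<lambda>_. False) (inf (nhds y) (filtermap s (uf_filter U)))"
      unfolding eventually_inf eventually_filtermap
      by (intro exI[of _ "\<lambda>z. z \<in> V"] exI[of _ "\<lambda>z. z \<notin> V"]) auto
    then show False using cluster by (simp add: trivial_limit_def)
  qed
  then show thesis using that y by (simp add: tendsto_def)
qed

lemma uf_lim_eqI:
  fixes s :: "nat \<Rightarrow> 'a::metric_space"
  assumes U: "ultrafilter_on_nat U" and "y \<in> X" and lim: "(s \<longlongrightarrow> y) (uf_filter U)"
  shows "uf_lim X U s = y"
  unfolding uf_lim_def
proof (rule the_equality)
  show "y \<in> X \<and> (\<forall>V. open V \<longrightarrow> y \<in> V \<longrightarrow> {m. s m \<in> V} \<in> U)"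
    using assms tendsto_uf_filter_iff[OF U] by blast
next
  fix z assume "z \<in> X \<and> (\<forall>V. open V \<longrightarrow> z \<in> V \<longrightarrow> {m. s m \<in> V} \<in> U)"
  then have "(s \<longlongrightarrow> z) (uf_filter U)" using tendsto_uf_filter_iff[OF U] by blast
  then show "z = y" using tendsto_unique[OF uf_filter_neq_bot[OF U]] lim by blast
qed

lemma uf_lim_uf_shift: "uf_lim X (uf_shift p n) s = uf_lim X p (\<lambda>m. s (m + n))"
  by (simp add: uf_lim_def uf_shift_def)

lemma tendsto_uniform_limit_compose:
  fixes g :: "'b \<Rightarrow> 'a::metric_space"
  assumes lim: "(g \<longlongrightarrow> z) F" "z \<in> X" and g: "\<And>m. g m \<in> X"
    and k: "filterlim k sequentially F"
    and unif: "uniform_limit X f \<phi> sequentially"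
    and cont: "continuous_on X \<phi>"
  shows "((\<lambda>m. f (k m) (g m)) \<longlongrightarrow> \<phi> z) F"
proof (rule tendstoI)
  fix e :: real assume "e > 0"
  have "\<forall>\<^sub>F n in sequentially. \<forall>x\<in>X. dist (f n x) (\<phi> x) < e/2"
    using uniform_limitD[OF unif, of "e/2"] \<open>e > 0\<close> by simp
  then have "\<forall>\<^sub>F m in F. \<forall>x\<in>X. dist (f (k m) x) (\<phi> x) < e/2"
    using filterlim_iff k by blast
  then have close: "\<forall>\<^sub>F m in F. dist (f (k m) (g m)) (\<phi> (g m)) < e/2"
    by (rule eventually_mono) (use g in blast)
  have "((\<lambda>m. \<phi> (g m)) \<longlongrightarrow> \<phi> z) F"
    using continuous_on_tendsto_compose[OF cont lim] g by simp
  then have "\<forall>\<^sub>F m in F. dist (\<phi> (g m)) (\<phi> z) < e/2"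
    by (rule tendstoD) (use \<open>e > 0\<close> in simp)
  with close show "\<forall>\<^sub>F m in F. dist (f (k m) (g m)) (\<phi> z) < e"
  proof eventually_elim
    case (elim m)
    then show ?case using dist_triangle[of "f (k m) (g m)" "\<phi> z" "\<phi> (g m)"] by linarith
  qed
qed

lemma comp_seq_in:
  assumes "\<And>n. n \<ge> 1 \<Longrightarrow> f n ` X \<subseteq> X" "x \<in> X"
  shows "comp_seq f m x \<in> X"
  using assms by (induction m) auto

lemma comp_uf_uf_shift:
  fixes X :: "'a::metric_space set"
  assumes X: "compact X"
    and f_cont: "\<And>n. n \<ge> 1 \<Longrightarrow> continuous_on X (f n)"
    and f_X: "\<And>n. n \<ge> 1 \<Longrightarrow> f n ` X \<subseteq> X"
    and \<phi>_X: "\<phi> ` X \<subseteq> X"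
    and unif: "uniform_limit X f \<phi> sequentially"
    and p: "free_ultrafilter_nat p"
    and "x \<in> X"
  shows "comp_uf X f (uf_shift p n) x = (\<phi> ^^ n) (comp_uf X f p x)"
proof -
  have U: "ultrafilter_on_nat p" using p by (simp add: free_ultrafilter_nat_def)
  define s where "s m = comp_seq f m x" for m
  have s_X: "s m \<in> X" for m
    unfolding s_def using f_X \<open>x \<in> X\<close> by (rule comp_seq_in)
  obtain y where y: "y \<in> X" "(s \<longlongrightarrow> y) (uf_filter p)"
    using compact_uf_filter_convergent[OF U X s_X] .
  have \<phi>_cont: "continuous_on X \<phi>"
    by (rule uniform_limit_theorem[OF _ unif])
       (auto intro: eventually_sequentiallyI[of 1] f_cont)
  have shifted: "((\<lambda>m. s (m + n)) \<longlongrightarrow> (\<phi> ^^ n) y) (uf_filter p) \<and> (\<phi> ^^ n) y \<in> X" for n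
  proof (induction n)
    case 0
    then show ?case using y by simp
  next
    case (Suc n)
    have "filterlim (\<lambda>m. Suc (m + n)) sequentially sequentially"
      by (intro filterlim_compose[OF filterlim_Suc] filterlim_add_const_nat_at_top)
    then have "filterlim (\<lambda>m. Suc (m + n)) sequentially (uf_filter p)"
      using free_uf_filter_le_sequentially[OF p] by (rule filterlim_mono[OF _ order.refl])
    from tendsto_uniform_limit_compose[OF Suc[THEN conjunct1] Suc[THEN conjunct2] s_X this unif \<phi>_cont]
    show ?case using Suc \<phi>_X by (auto simp: s_def)
  qed
  have "comp_uf X f p x = y"
    unfolding comp_uf_def using uf_lim_eqI[OF U y] by (simp add: s_def[abs_def])
  moreover have "comp_uf X f (uf_shift p n) x = (\<phi> ^^ n) y"
    unfolding comp_uf_def uf_lim_uf_shift using uf_lim_eqI[OF U _ shifted[THEN conjunct1]] shifted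
    by (simp add: s_def[abs_def])
  ultimately show ?thesis by simp
qed

theorem corollary3p14:
  fixes X :: "'a::metric_space set"
    and f :: "nat \<Rightarrow> 'a \<Rightarrow> 'a"
    and \<phi> :: "'a \<Rightarrow> 'a"
    and p :: "nat set set"
    and x :: 'a
  assumes "compact X"
    and "\<And>n. n \<ge> 1 \<Longrightarrow> continuous_on X (f n)"
    and "\<And>n. n \<ge> 1 \<Longrightarrow> f n ` X \<subseteq> X"
    and "\<phi> ` X \<subseteq> X"
    and "uniform_limit X f \<phi> sequentially"
    and "free_ultrafilter_nat p"
    and "x \<in> X"
  shows "periodic_point \<phi> (comp_uf X f p x) \<longleftrightarrow>
         (\<exists>n::nat. n > 0 \<and> comp_uf X f p x = comp_uf X f (uf_shift p n) x)"
  using comp_uf_uf_shift[OF assms] unfolding periodic_point_def by (metis eq_commute)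

end
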